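(* Let $\mathbf{S}=\mathbf{V}\boldsymbol{\Lambda}\mathbf{V}^{\mathsf{H}}$ and $\hat{\mathbf{S}}$ be $N\times N$ graph shift operators, and let $\mathbf{h}$ be an integral Lipschitz filter with integral Lipschitz constant $C$. Assume there exists a relative perturbation matrix $\mathbf{E}=\mathbf{U}\mathbf{M}\mathbf{U}^{\mathsf{H}}\in\mathcal{E}(\mathbf{S},\hat{\mathbf{S}})$ with $d(\mathbf{S},\hat{\mathbf{S}})\le\|\mathbf{E}\|\le\varepsilon$ that furthermore satisfies $$\min\left[\left\|\frac{\mathbf{E}}{\|\mathbf{E}\|}-\mathbf{I}\right\|,\ \left\|\frac{\mathbf{E}}{\|\mathbf{E}\|}+\mathbf{I}\right\|\right]\le\varepsilon.$$ Then $$\|\mathbf{H}(\mathbf{S})-\mathbf{H}(\hat{\mathbf{S}})\|_{\mathcal{P}}\le 2C\varepsilon+\mathcal{O}(\varepsilon^2).$$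
   Context: A graph shift operator is a real symmetric $N\times N$ matrix; $\mathbf{S}=\mathbf{V}\boldsymbol{\Lambda}\mathbf{V}^{\mathsf{H}}$ with $\mathbf{V}$ orthonormal eigenvectors and $\boldsymbol{\Lambda}$ diagonal; $\mathbf{E}$ is symmetric with $\mathbf{U}$ orthonormal and $\mathbf{M}$ diagonal. $\|\cdot\|$ denotes the spectral norm (Euclidean norm for vectors). $\mathcal{P}$ is the set of $N\times N$ permutation matrices. $\mathcal{E}(\mathbf{S},\hat{\mathbf{S}})=\{\mathbf{E}:\mathbf{P}^{\mathsf{T}}\hat{\mathbf{S}}\mathbf{P}=\mathbf{S}+(\mathbf{E}\mathbf{S}+\mathbf{S}\mathbf{E})\text{ for some }\mathbf{P}\in\mathcal{P}\}$, and $d(\mathbf{S},\hat{\mathbf{S}})=\min\{\|\mathbf{E}\|:\mathbf{P}\in\mathcal{P},\ \mathbf{P}^{\mathsf{T}}\hat{\mathbf{S}}\mathbf{P}=\mathbf{S}+\mathbf{E}\mathbf{S}+\mathbf{S}\mathbf{E}\}$. For linear operators, $\|\mathbf{A}-\hat{\mathbf{A}}\|_{\mathcal{P}}=\min_{\mathbf{P}\in\mathcal{P}}\max_{\|\mathbf{x}\|=1}\|\mathbf{P}^{\mathsf{T}}(\mathbf{A}\mathbf{x})-\hat{\mathbf{A}}(\mathbf{P}^{\mathsf{T}}\mathbf{x})\|$. A filter $\mathbf{h}=\{h_k\}_{k\ge0}$ defines $\mathbf{H}(\mathbf{S})=\sum_k h_k\mathbf{S}^k$ and frequency response $h(\lambda)=\sum_k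 h_k\lambda^k$ (analytic), with $|h(\lambda)|\le1$; it is integral Lipschitz with constant $C>0$ if $|h(\lambda_2)-h(\lambda_1)|\le C\,\frac{|\lambda_2-\lambda_1|}{|\lambda_1+\lambda_2|/2}$ for all $\lambda_1,\lambda_2$. $\mathcal{O}(\varepsilon^2)$ denotes a term bounded by a constant times $\varepsilon^2$. *)

theory Defs
  imports "HOL-Analysis.Analysis"
begin

definition symmetric_mat :: "real^'n^'n \<Rightarrow> bool" where
  "symmetric_mat A \<longleftrightarrow> transpose A = A"

definition snorm :: "real^'n^'n \<Rightarrow> real" where
  "snorm A = onorm (\<lambda>x. A *v x)"

primrec mpow :: "real^'n^'n \<Rightarrow> nat \<Rightarrow> real^'n^'n" where
  "mpow A 0 = mat 1"
| "mpow A (Suc k) = A ** mpow A k"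

definition graph_filter :: "(nat \<Rightarrow> real) \<Rightarrow> real^'n^'n \<Rightarrow> real^'n^'n" where
  "graph_filter h S = (\<Sum>k. h k *\<^sub>R mpow S k)"

definition freq_resp :: "(nat \<Rightarrow> real) \<Rightarrow> real \<Rightarrow> real" where
  "freq_resp h t = (\<Sum>k. h k * t ^ k)"

text \<open>Integral Lipschitz condition, written multiplied out to avoid division by zero.\<close>
definition integral_lipschitz :: "(nat \<Rightarrow> real) \<Rightarrow> real \<Rightarrow> bool" where
  "integral_lipschitz h C \<longleftrightarrow> C > 0 \<and>
     (\<forall>l1 l2. \<bar>freq_resp h l2 - freq_resp h l1\<bar> * (\<bar>l1 + l2\<bar> / 2) \<le> C * \<bar>l2 - l1\<bar>)"

definition perm_mat :: "('n \<Rightarrow> 'n) \<Rightarrow> real^'n^'n" where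
  "perm_mat p = (\<chi> i j. if p j = i then 1 else 0)"

definition perm_mats :: "(real^'n^'n) set" where
  "perm_mats = {perm_mat p | p. p permutes (UNIV :: 'n set)}"

definition rel_pert_set :: "real^'n^'n \<Rightarrow> real^'n^'n \<Rightarrow> (real^'n^'n) set" where
  "rel_pert_set S S' = {E. \<exists>P \<in> perm_mats. transpose P ** S' ** P = S + (E ** S + S ** E)}"

definition pert_dist :: "real^'n^'n \<Rightarrow> real^'n^'n \<Rightarrow> real" where
  "pert_dist S S' = Inf {snorm E | E P. P \<in> perm_mats \<and> transpose P ** S' ** P = S + E ** S + S ** E}"

definition perm_op_dist :: "real^'n^'n \<Rightarrow> real^'n^'n \<Rightarrow> real" where
  "perm_op_dist A A' = Min ((\<lambda>P. onorm (\<lambda>x. transpose P *v (A *v x) - A' *v (transpose P *v x))) ` perm_mats)"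

end

theory Submission
  imports Defs
begin

text \<open>After relabelling the nodes, the perturbed shift is \<open>A = S + E S + S E\<close>. If \<open>E / \<parallel>E\<parallel>\<close> is
  within \<open>\<epsilon>\<close> of \<open>\<plusminus>I\<close>, then \<open>E\<close> is within \<open>\<epsilon>\<^sup>2\<close> of \<open>a I\<close> with \<open>|a| \<le> \<epsilon>\<close>, so \<open>A\<close> is within
  \<open>2 \<epsilon>\<^sup>2 \<parallel>S\<parallel>\<close> of the rescaled shift \<open>B = (1 + 2 a) S\<close>. Integral Lipschitz filters are stable
  under rescaling: in an eigenbasis of \<open>S\<close>, \<open>H(S) - H(B)\<close> is diagonal with entries
  \<open>h(\<lambda>) - h((1 + 2 a) \<lambda>)\<close>, of size at most \<open>2 C \<epsilon> + 4 C \<epsilon>\<^sup>2\<close>. The remaining difference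
  \<open>H(B) - H(A)\<close> is of second order because on matrices of spectral norm at most \<open>R\<close> the
  power series \<open>H\<close> is Lipschitz with constant \<open>\<Sum>\<^sub>k |h\<^sub>k| k R\<^bsup>k-1\<^esup>\<close>. For \<open>\<epsilon> \<ge> 1/4\<close> the bound is trivial since \<open>|h| \<le> 1\<close>.\<close>

section \<open>Matrices and the spectral norm\<close>

lemma matrix_diff_ldistrib: "(A :: real^'n^'m) ** (B - C) = A ** B - A ** C"
  by (simp add: vec_eq_iff matrix_matrix_mult_def right_diff_distrib sum_subtractf)

lemma matrix_diff_rdistrib: "((A - B) :: real^'n^'m) ** C = A ** C - B ** C"
  by (simp add: vec_eq_iff matrix_matrix_mult_def left_diff_distrib sum_subtractf)

lemma norm_mult_vec_le_snorm: "norm (A *v x) \<le> snorm A * norm x"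
  unfolding snorm_def by (rule onorm[OF matrix_vector_mul_bounded_linear])

lemma snorm_nonneg: "0 \<le> snorm A"
  unfolding snorm_def by (rule onorm_pos_le[OF matrix_vector_mul_bounded_linear])

lemma snorm_le:
  assumes "\<And>x. norm (A *v x) \<le> b * norm x"
  shows "snorm A \<le> b"
  unfolding snorm_def by (rule onorm_le[OF assms])

lemma snorm_add_le: "snorm (A + B) \<le> snorm A + snorm B"
  unfolding snorm_def matrix_vector_mult_add_rdistrib
  by (rule onorm_triangle) (rule matrix_vector_mul_bounded_linear)+

lemma snorm_mult_le: "snorm (A ** B) \<le> snorm A * snorm B"
proof -
  have "(\<lambda>x. (A ** B) *v x) = (\<lambda>x. A *v x) \<circ> (\<lambda>x. B *v x)"
    by (simp add: o_def matrix_vector_mul_assoc)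
  then show ?thesis
    unfolding snorm_def by (metis onorm_compose matrix_vector_mul_bounded_linear)
qed

lemma snorm_scaleR: "snorm (c *\<^sub>R A) = \<bar>c\<bar> * snorm A"
proof -
  have "(\<lambda>x. (c *\<^sub>R A) *v x) = (\<lambda>x. c *\<^sub>R (A *v x))"
    by (simp add: scaleR_matrix_vector_assoc)
  then show ?thesis
    unfolding snorm_def by (simp add: onorm_scaleR[OF matrix_vector_mul_bounded_linear])
qed

lemma snorm_diff_le: "snorm (A - B) \<le> snorm A + snorm B"
  using snorm_add_le[of A "(-1) *\<^sub>R B"] snorm_scaleR[of "-1" B] by simp

lemma snorm_mat_1: "snorm (mat 1 :: real^'n^'n) = 1"
proof -
  have id: "(\<lambda>x. (mat 1 :: real^'n^'n) *v x) = (\<lambda>x. x)" by simp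
  show ?thesis unfolding snorm_def id by (rule onorm_id)
qed

lemma inner_matrix_vector_transpose:
  fixes A :: "real^'n^'m"
  shows "(A *v x) \<bullet> y = x \<bullet> (transpose A *v y)"
proof -
  have "(A *v x) \<bullet> y = (x v* transpose A) \<bullet> y" by (simp add: vector_transpose_matrix)
  also have "\<dots> = x \<bullet> (transpose A *v y)" by (rule dot_lmul_matrix)
  finally show ?thesis .
qed

lemma symmetric_mat_inner:
  assumes "symmetric_mat A"
  shows "(A *v x) \<bullet> y = x \<bullet> (A *v y)"
  using assms by (simp add: inner_matrix_vector_transpose symmetric_mat_def)

lemma inner_orthogonal_matrix_mult_vec:
  fixes P :: "real^'n^'n"
  assumes "orthogonal_matrix P"
  shows "(P *v u) \<bullet> (P *v v) = u \<bullet> v"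
  using assms
  by (simp add: inner_matrix_vector_transpose matrix_vector_mul_assoc orthogonal_matrix_def)

lemma norm_orthogonal_matrix_mult_vec:
  fixes P :: "real^'n^'n"
  assumes "orthogonal_matrix P"
  shows "norm (P *v u) = norm u"
  using inner_orthogonal_matrix_mult_vec[OF assms, of u u] by (simp add: norm_eq_sqrt_inner)

section \<open>Spectral theorem for symmetric matrices\<close>

lemma quadratic_nonpos_imp_zero:
  fixes a b :: real
  assumes "a \<ge> 0" and "\<And>t. t > 0 \<Longrightarrow> 2 * t * a + t\<^sup>2 * b \<le> 0"
  shows "a = 0"
proof (rule ccontr)
  assume "a \<noteq> 0"
  with assms(1) have a: "a > 0" by simp
  define t where "t = a / (\<bar>b\<bar> + 1)"
  have t: "t > 0" using a by (simp add: t_def)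
  have "t * (2 * a + t * b) \<le> 0"
    using assms(2)[OF t] by (simp add: algebra_simps power2_eq_square)
  then have "2 * a + t * b \<le> 0" using t by (simp add: mult_le_0_iff)
  moreover have "t * \<bar>b\<bar> < a" using a by (simp add: t_def field_simps)
  moreover have "- (t * b) \<le> t * \<bar>b\<bar>" using t
    by (metis abs_ge_minus_self mult_left_mono less_imp_le mult_minus_right)
  ultimately show False using a by linarith
qed

text \<open>Moving a maximiser \<open>v\<close> of the Rayleigh quotient in the direction \<open>w = A v - \<lambda> v\<close> cannot
  increase the quotient; to second order in the step size this forces \<open>w = 0\<close>.\<close>

lemma symmetric_mat_rayleigh_max_eigenvector:
  assumes sym: "symmetric_mat A" and W: "subspace W" and inv: "\<And>x. x \<in> W \<Longrightarrow> A *v x \<in> W"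
    and vW: "v \<in> W" and vv: "v \<bullet> v = 1"
    and max: "\<And>y. y \<in> W \<Longrightarrow> y \<bullet> (A *v y) \<le> (v \<bullet> (A *v v)) * (y \<bullet> y)"
  shows "A *v v = (v \<bullet> (A *v v)) *\<^sub>R v"
proof -
  define l where "l = v \<bullet> (A *v v)"
  define w where "w = A *v v - l *\<^sub>R v"
  have wW: "w \<in> W" unfolding w_def using vW inv W by (simp add: subspace_diff subspace_scale)
  have ww: "w \<bullet> w = w \<bullet> (A *v v) - l * (v \<bullet> w)"
    by (metis inner_diff_right inner_scaleR_right w_def inner_commute)
  have "2 * t * (w \<bullet> w) + t\<^sup>2 * (w \<bullet> (A *v w) - l * (w \<bullet> w)) \<le> 0" for t
  proof -
    have "v + t *\<^sub>R w \<in> W" using vW wW W by (simp add: subspace_add subspace_scale)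
    then have le: "(v + t *\<^sub>R w) \<bullet> (A *v (v + t *\<^sub>R w)) \<le> l * ((v + t *\<^sub>R w) \<bullet> (v + t *\<^sub>R w))"
      unfolding l_def by (rule max)
    have Av: "A *v (v + t *\<^sub>R w) = A *v v + t *\<^sub>R (A *v w)"
      by (simp add: matrix_vector_right_distrib matrix_vector_mult_scaleR)
    have vAw: "v \<bullet> (A *v w) = w \<bullet> (A *v v)"
      using symmetric_mat_inner[OF sym, of v w] by (simp add: inner_commute)
    have quot: "(v + t *\<^sub>R w) \<bullet> (A *v (v + t *\<^sub>R w))
        = l + 2 * t * (w \<bullet> (A *v v)) + t\<^sup>2 * (w \<bullet> (A *v w))"
      unfolding Av
      by (simp add: inner_add_left inner_add_right vAw l_def power2_eq_square distrib_left mult.assoc)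
    have norm2: "(v + t *\<^sub>R w) \<bullet> (v + t *\<^sub>R w) = 1 + 2 * t * (v \<bullet> w) + t\<^sup>2 * (w \<bullet> w)"
      using vv by (simp add: inner_add_left inner_add_right power2_eq_square inner_commute)
    have expand: "2 * t * (a - l * p) + t\<^sup>2 * (q - l * r)
        = (l + 2 * t * a + t\<^sup>2 * q) - l * (1 + 2 * t * p + t\<^sup>2 * r)" for a p q r :: real
      by (simp add: algebra_simps power2_eq_square)
    have "2 * t * (w \<bullet> w) + t\<^sup>2 * (w \<bullet> (A *v w) - l * (w \<bullet> w))
        = 2 * t * (w \<bullet> (A *v v) - l * (v \<bullet> w)) + t\<^sup>2 * (w \<bullet> (A *v w) - l * (w \<bullet> w))"
      using ww by simp
    also have "\<dots> \<le> 0"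
      unfolding expand using le unfolding quot norm2 by linarith
    finally show ?thesis .
  qed
  then have "w \<bullet> w = 0"
    by (intro quadratic_nonpos_imp_zero[of "w \<bullet> w" "w \<bullet> (A *v w) - l * (w \<bullet> w)"]) auto
  then have "w = 0" by simp
  then show ?thesis using eq_iff_diff_eq_0 unfolding w_def l_def by blast
qed

lemma symmetric_mat_invariant_subspace_eigenvector:
  assumes sym: "symmetric_mat A" and W: "subspace W" and inv: "\<And>x. x \<in> W \<Longrightarrow> A *v x \<in> W"
    and x0: "x0 \<in> W" "x0 \<noteq> 0"
  shows "\<exists>v\<in>W. norm v = 1 \<and> A *v v = (v \<bullet> (A *v v)) *\<^sub>R v"
proof -
  define K where "K = W \<inter> sphere 0 1"
  have cK: "compact K"
    unfolding K_def by (metis W closed_subspace compact_Int_closed compact_sphere inf_commute)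
  have "x0 /\<^sub>R norm x0 \<in> K" using x0 W by (simp add: K_def subspace_scale)
  then have neK: "K \<noteq> {}" by auto
  have cq: "continuous_on K (\<lambda>x. x \<bullet> (A *v x))"
    by (intro continuous_on_inner continuous_on_id linear_continuous_on matrix_vector_mul_bounded_linear)
  obtain v where vK: "v \<in> K" and vmax: "\<And>y. y \<in> K \<Longrightarrow> y \<bullet> (A *v y) \<le> v \<bullet> (A *v v)"
    using continuous_attains_sup[OF cK neK cq] by blast
  have vW: "v \<in> W" and nv: "norm v = 1" using vK by (auto simp: K_def)
  have "A *v v = (v \<bullet> (A *v v)) *\<^sub>R v"
  proof (rule symmetric_mat_rayleigh_max_eigenvector[OF sym W inv vW])
    show "v \<bullet> v = 1" using nv by (simp add: dot_square_norm)
    fix y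
    assume "y \<in> W"
    show "y \<bullet> (A *v y) \<le> (v \<bullet> (A *v v)) * (y \<bullet> y)"
    proof (cases "y = 0")
      case False
      define u where "u = y /\<^sub>R norm y"
      have "u \<in> K" using \<open>y \<in> W\<close> False W by (simp add: K_def u_def subspace_scale)
      then have "u \<bullet> (A *v u) \<le> v \<bullet> (A *v v)" by (rule vmax)
      moreover have "u \<bullet> (A *v u) = (y \<bullet> (A *v y)) / (norm y)\<^sup>2"
        unfolding u_def using False by (simp add: matrix_vector_mult_scaleR power2_eq_square field_simps)
      ultimately have "y \<bullet> (A *v y) \<le> (v \<bullet> (A *v v)) * (norm y)\<^sup>2"
        using False by (simp add: divide_le_eq)
      then show ?thesis by (simp add: dot_square_norm)
    qed simp
  qed
  then show ?thesis using vW nv by blast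
qed

lemma symmetric_mat_orthonormal_eigenvectors:
  fixes A :: "real^'n^'n"
  assumes sym: "symmetric_mat A" and "k \<le> CARD('n)"
  shows "\<exists>B. finite B \<and> card B = k \<and> pairwise orthogonal B \<and>
           (\<forall>b\<in>B. norm b = 1 \<and> A *v b = (b \<bullet> (A *v b)) *\<^sub>R b)"
  using assms(2)
proof (induction k)
  case 0
  show ?case by (intro exI[of _ "{}"]) simp
next
  case (Suc k)
  obtain B :: "(real^'n) set" where fB: "finite B" and cB: "card B = k"
    and oB: "pairwise orthogonal B" and eB: "\<forall>b\<in>B. norm b = 1 \<and> A *v b = (b \<bullet> (A *v b)) *\<^sub>R b"
    using Suc.IH[OF Suc_leD[OF Suc.prems]] by blast
  have "span B \<noteq> UNIV"
  proof
    assume "span B = UNIV"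
    then have "dim (UNIV :: (real^'n) set) \<le> card B"
      using span_card_ge_dim[of B UNIV] fB by auto
    then show False using cB Suc.prems by (simp add: dim_UNIV)
  qed
  then obtain a :: "real^'n" where a0: "a \<noteq> 0" and aspan: "span B \<subseteq> {x. a \<bullet> x = 0}"
    using span_not_univ_subset_hyperplane by blast
  define W where "W = {x :: real^'n. \<forall>b\<in>B. b \<bullet> x = 0}"
  have sW: "subspace W"
    unfolding W_def subspace_def by (simp add: inner_add_right inner_scaleR_right)
  have aW: "a \<in> W"
    unfolding W_def using aspan span_superset by (fastforce simp: inner_commute)
  have iW: "A *v x \<in> W" if "x \<in> W" for x
  proof -
    have "b \<bullet> (A *v x) = (b \<bullet> (A *v b)) * (b \<bullet> x)" if "b \<in> B" for b
      using symmetric_mat_inner[OF sym, of b x] eB that by (metis inner_scaleR_left)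
    then show ?thesis using that unfolding W_def by simp
  qed
  obtain v where vW: "v \<in> W" and nv: "norm v = 1" and ev: "A *v v = (v \<bullet> (A *v v)) *\<^sub>R v"
    using symmetric_mat_invariant_subspace_eigenvector[OF sym sW iW aW a0] by blast
  have vB: "v \<notin> B" using vW nv unfolding W_def by (auto simp: dot_square_norm)
  have "pairwise orthogonal (insert v B)"
    using oB vW unfolding W_def pairwise_insert orthogonal_def by (auto simp: inner_commute)
  moreover have "\<forall>b\<in>insert v B. norm b = 1 \<and> A *v b = (b \<bullet> (A *v b)) *\<^sub>R b"
    using eB nv ev by blast
  ultimately show ?case
    using fB cB vB by (intro exI[of _ "insert v B"]) simp
qed

text \<open>\<open>spectral_sum g d\<close> is \<open>V diag d V\<^sup>T\<close>, where \<open>V\<close> has the columns \<open>g i\<close>.\<close>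

definition outer_prod :: "real^'n \<Rightarrow> real^'n^'n" where
  "outer_prod v = (\<chi> i j. v$i * v$j)"

definition spectral_sum :: "('n \<Rightarrow> real^'n) \<Rightarrow> ('n \<Rightarrow> real) \<Rightarrow> real^'n^'n" where
  "spectral_sum g d = (\<Sum>i\<in>UNIV. d i *\<^sub>R outer_prod (g i))"

definition orthonormal_family :: "('n \<Rightarrow> real^'n) \<Rightarrow> bool" where
  "orthonormal_family g \<longleftrightarrow> (\<forall>i j. g i \<bullet> g j = (if i = j then 1 else 0))"

lemma outer_prod_mult_vec: "outer_prod v *v x = (v \<bullet> x) *\<^sub>R v"
proof -
  have "(outer_prod v *v x) $ r = (\<Sum>j\<in>UNIV. v$r * (v$j * x$j))" for r
    unfolding outer_prod_def matrix_vector_mult_def by (simp add: mult.assoc)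
  then show ?thesis
    by (simp add: vec_eq_iff inner_vec_def sum_distrib_left mult.commute)
qed

lemma sum_matrix_vector_mult: "(\<Sum>i\<in>I. M i) *v x = (\<Sum>i\<in>I. M i *v x)"
proof (induction I rule: infinite_finite_induct)
  case empty
  then show ?case by (simp add: vec_eq_iff matrix_vector_mult_def)
qed (simp_all add: matrix_vector_mult_add_rdistrib)

lemma spectral_sum_mult_vec: "spectral_sum g d *v x = (\<Sum>i\<in>UNIV. (d i * (g i \<bullet> x)) *\<^sub>R g i)"
  unfolding spectral_sum_def sum_matrix_vector_mult
  by (simp add: scaleR_matrix_vector_assoc[symmetric] outer_prod_mult_vec)

lemma spectral_sum_diff: "spectral_sum g d - spectral_sum g d' = spectral_sum g (\<lambda>i. d i - d' i)"
  by (simp add: spectral_sum_def sum_subtractf scaleR_diff_left)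

lemma spectral_sum_scaleR: "c *\<^sub>R spectral_sum g d = spectral_sum g (\<lambda>i. c * d i)"
  by (simp add: spectral_sum_def scaleR_sum_right)

lemma orthonormal_family_inner_sum:
  assumes "orthonormal_family g"
  shows "g j \<bullet> (\<Sum>i\<in>UNIV. c i *\<^sub>R g i) = c j"
proof -
  have "g j \<bullet> (\<Sum>i\<in>UNIV. c i *\<^sub>R g i) = (\<Sum>i\<in>UNIV. if j = i then c i else 0)"
    using assms by (intro trans[OF inner_sum_right sum.cong]) (auto simp: orthonormal_family_def)
  then show ?thesis by simp
qed

lemma orthonormal_family_parseval:
  assumes "orthonormal_family g"
  shows "(\<Sum>i\<in>UNIV. c i *\<^sub>R g i) \<bullet> (\<Sum>i\<in>UNIV. c i *\<^sub>R g i) = (\<Sum>i\<in>UNIV. (c i)\<^sup>2)"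
  by (simp add: inner_sum_left orthonormal_family_inner_sum[OF assms] power2_eq_square)

lemma orthonormal_family_expansion:
  fixes g :: "'n \<Rightarrow> real^'n"
  assumes "orthonormal_family g"
  shows "x = (\<Sum>i\<in>UNIV. (g i \<bullet> x) *\<^sub>R g i)"
proof -
  define V :: "real^'n^'n" where "V = (\<chi> r c. g c $ r)"
  have "(transpose V ** V) $ i $ j = g i \<bullet> g j" for i j
    by (simp add: matrix_matrix_mult_def transpose_def V_def inner_vec_def)
  then have "transpose V ** V = mat 1"
    using assms by (simp add: vec_eq_iff mat_def orthonormal_family_def)
  then have "V ** transpose V = mat 1" by (rule matrix_left_right_inverse1)
  then have "x = V *v (transpose V *v x)"
    by (metis matrix_vector_mul_assoc matrix_vector_mul_lid)
  also have "\<dots> = (\<Sum>i\<in>UNIV. (g i \<bullet> x) *\<^sub>R g i)"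
  proof -
    have "(transpose V *v x) $ i = g i \<bullet> x" for i
      by (simp add: matrix_vector_mult_def transpose_def V_def inner_vec_def)
    then show ?thesis
      by (simp add: vec_eq_iff matrix_vector_mult_def V_def mult.commute)
  qed
  finally show ?thesis .
qed

lemma orthonormal_family_norm:
  assumes "orthonormal_family g"
  shows "(norm x)\<^sup>2 = (\<Sum>i\<in>UNIV. (g i \<bullet> x)\<^sup>2)"
  using orthonormal_family_parseval[OF assms, of "\<lambda>i. g i \<bullet> x"]
  by (simp flip: orthonormal_family_expansion[OF assms] add: dot_square_norm)

lemma snorm_spectral_sum_le:
  assumes g: "orthonormal_family g" and d: "\<And>i. \<bar>d i\<bar> \<le> m"
  shows "snorm (spectral_sum g d) \<le> m"
proof (rule snorm_le)
  fix x
  have m: "0 \<le> m" using d by (meson abs_ge_zero order_trans)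
  have "(norm (spectral_sum g d *v x))\<^sup>2 = (\<Sum>i\<in>UNIV. (d i * (g i \<bullet> x))\<^sup>2)"
    unfolding spectral_sum_mult_vec dot_square_norm[symmetric] by (rule orthonormal_family_parseval[OF g])
  also have "\<dots> \<le> (\<Sum>i\<in>UNIV. m\<^sup>2 * (g i \<bullet> x)\<^sup>2)"
  proof (rule sum_mono)
    fix i
    have "(d i)\<^sup>2 \<le> m\<^sup>2"
      using abs_le_square_iff[of "d i" m] d[of i] m by simp
    then show "(d i * (g i \<bullet> x))\<^sup>2 \<le> m\<^sup>2 * (g i \<bullet> x)\<^sup>2"
      by (simp add: power_mult_distrib mult_right_mono)
  qed
  also have "\<dots> = (m * norm x)\<^sup>2"
    by (simp add: orthonormal_family_norm[OF g] sum_distrib_left power_mult_distrib)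
  finally show "norm (spectral_sum g d *v x) \<le> m * norm x"
    by (rule power2_le_imp_le) (simp add: m)
qed

lemma symmetric_mat_spectral_sum:
  fixes A :: "real^'n^'n"
  assumes sym: "symmetric_mat A"
  obtains g d where "orthonormal_family g" and "A = spectral_sum g d"
proof -
  obtain B where fB: "finite B" and cB: "card B = CARD('n)" and oB: "pairwise orthogonal B"
    and eB: "\<forall>b\<in>B. norm b = 1 \<and> A *v b = (b \<bullet> (A *v b)) *\<^sub>R b"
    using symmetric_mat_orthonormal_eigenvectors[OF sym order_refl] by blast
  obtain g where bij: "bij_betw g (UNIV :: 'n set) B"
    using finite_same_card_bij[of "UNIV :: 'n set" B] fB cB by auto
  then have gB: "g i \<in> B" and g_inj: "g i = g j \<longleftrightarrow> i = j" for i j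
    by (auto simp: bij_betw_def inj_on_def)
  have g: "orthonormal_family g"
    unfolding orthonormal_family_def
    using eB gB oB g_inj by (auto simp: dot_square_norm pairwise_def orthogonal_def)
  define d where "d i = g i \<bullet> (A *v g i)" for i
  have "A *v x = spectral_sum g d *v x" for x
  proof -
    have "A *v x = (\<Sum>i\<in>UNIV. (g i \<bullet> x) *\<^sub>R (A *v g i))"
      by (subst orthonormal_family_expansion[OF g, of x]) (simp add: vec.sum matrix_vector_mult_scaleR)
    also have "\<dots> = spectral_sum g d *v x"
    proof -
      have "A *v g i = d i *\<^sub>R g i" for i
        using eB gB unfolding d_def by blast
      then show ?thesis by (simp add: spectral_sum_mult_vec mult.commute)
    qed
    finally show ?thesis .
  qed
  then have "A = spectral_sum g d" by (simp add: matrix_eq)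
  with g show thesis by (rule that)
qed

section \<open>Graph filters of symmetric matrices\<close>

lemma mpow_spectral_sum:
  assumes g: "orthonormal_family g"
  shows "mpow (spectral_sum g d) k = spectral_sum g (\<lambda>i. d i ^ k)"
proof (induction k)
  case 0
  show ?case
    unfolding matrix_eq by (simp add: spectral_sum_mult_vec flip: orthonormal_family_expansion[OF g])
next
  case (Suc k)
  show ?case
    unfolding matrix_eq
    by (simp add: Suc flip: matrix_vector_mul_assoc)
       (simp add: spectral_sum_mult_vec orthonormal_family_inner_sum[OF g] mult.assoc)
qed

lemma graph_filter_spectral_sum:
  assumes g: "orthonormal_family g" and hs: "\<forall>l. summable (\<lambda>k. h k * l ^ k)"
  shows "summable (\<lambda>k. h k *\<^sub>R mpow (spectral_sum g d) k)"
    and "graph_filter h (spectral_sum g d) = spectral_sum g (\<lambda>i. freq_resp h (d i))"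
proof -
  have terms: "h k *\<^sub>R mpow (spectral_sum g d) k = (\<Sum>i\<in>UNIV. (h k * d i ^ k) *\<^sub>R outer_prod (g i))" for k
    unfolding mpow_spectral_sum[OF g] unfolding spectral_sum_def by (simp add: scaleR_sum_right)
  have summable: "summable (\<lambda>k. (h k * d i ^ k) *\<^sub>R outer_prod (g i))" for i
    using hs by (intro summable_scaleR_left) auto
  show "summable (\<lambda>k. h k *\<^sub>R mpow (spectral_sum g d) k)"
    unfolding terms by (intro summable_sum summable)
  have "graph_filter h (spectral_sum g d) = (\<Sum>i\<in>UNIV. \<Sum>k. (h k * d i ^ k) *\<^sub>R outer_prod (g i))"
    unfolding graph_filter_def terms by (rule suminf_sum[OF summable])
  also have "\<dots> = spectral_sum g (\<lambda>i. freq_resp h (d i))"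
    unfolding spectral_sum_def freq_resp_def using hs by (simp add: suminf_scaleR_left)
  finally show "graph_filter h (spectral_sum g d) = spectral_sum g (\<lambda>i. freq_resp h (d i))" .
qed

lemma summable_graph_filter_symmetric:
  assumes "symmetric_mat A" and "\<forall>l. summable (\<lambda>k. h k * l ^ k)"
  shows "summable (\<lambda>k. h k *\<^sub>R mpow A k)"
  by (metis assms symmetric_mat_spectral_sum graph_filter_spectral_sum(1))

lemma snorm_graph_filter_le:
  assumes "symmetric_mat A" and hs: "\<forall>l. summable (\<lambda>k. h k * l ^ k)"
    and "\<And>l. \<bar>freq_resp h l\<bar> \<le> m"
  shows "snorm (graph_filter h A) \<le> m"
proof -
  obtain g d where g: "orthonormal_family g" and "A = spectral_sum g d"
    using symmetric_mat_spectral_sum[OF assms(1)] .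
  then show ?thesis
    using assms(3) by (simp add: graph_filter_spectral_sum(2)[OF g hs] snorm_spectral_sum_le[OF g])
qed

lemma orthonormal_family_orthogonal_mult:
  assumes "orthogonal_matrix P" and "orthonormal_family g"
  shows "orthonormal_family (\<lambda>i. P *v g i)"
  using assms by (simp add: orthonormal_family_def inner_orthogonal_matrix_mult_vec)

lemma spectral_sum_orthogonal_conj:
  assumes "orthogonal_matrix P"
  shows "P ** spectral_sum g d ** transpose P = spectral_sum (\<lambda>i. P *v g i) d"
proof -
  have "g i \<bullet> (transpose P *v x) = (P *v g i) \<bullet> x" for i x
    by (simp add: inner_matrix_vector_transpose)
  then show ?thesis
    unfolding matrix_eq
    by (simp add: spectral_sum_mult_vec vec.sum matrix_vector_mult_scaleR flip: matrix_vector_mul_assoc)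
qed

lemma graph_filter_orthogonal_conj:
  assumes P: "orthogonal_matrix P" and "symmetric_mat A" and hs: "\<forall>l. summable (\<lambda>k. h k * l ^ k)"
  shows "graph_filter h (P ** A ** transpose P) = P ** graph_filter h A ** transpose P"
proof -
  obtain g d where g: "orthonormal_family g" and A: "A = spectral_sum g d"
    using symmetric_mat_spectral_sum[OF assms(2)] .
  have Pg: "orthonormal_family (\<lambda>i. P *v g i)"
    by (rule orthonormal_family_orthogonal_mult[OF P g])
  show ?thesis
    unfolding A spectral_sum_orthogonal_conj[OF P] graph_filter_spectral_sum(2)[OF g hs]
      graph_filter_spectral_sum(2)[OF Pg hs] ..
qed

lemma integral_lipschitz_scale:
  assumes IL: "integral_lipschitz h C" and c: "c > -1"
  shows "\<bar>freq_resp h t - freq_resp h (c * t)\<bar> * (1 + c) \<le> 2 * C * \<bar>c - 1\<bar>"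
proof (cases "t = 0")
  case True
  then show ?thesis using IL by (simp add: integral_lipschitz_def)
next
  case False
  have lip: "\<bar>freq_resp h (c * t) - freq_resp h t\<bar> * (\<bar>t + c * t\<bar> / 2) \<le> C * \<bar>c * t - t\<bar>"
    using IL unfolding integral_lipschitz_def by blast
  have "t + c * t = t * (1 + c)" and "c * t - t = t * (c - 1)"
    by (simp_all add: algebra_simps)
  then have "\<bar>t + c * t\<bar> = \<bar>t\<bar> * (1 + c)" and "\<bar>c * t - t\<bar> = \<bar>t\<bar> * \<bar>c - 1\<bar>"
    using c by (simp_all add: abs_mult)
  then have "\<bar>t\<bar> * (\<bar>freq_resp h t - freq_resp h (c * t)\<bar> * (1 + c)) \<le> \<bar>t\<bar> * (2 * C * \<bar>c - 1\<bar>)"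
    using lip by (simp add: abs_minus_commute algebra_simps)
  then show ?thesis using False by simp
qed

lemma integral_lipschitz_scale_le:
  assumes IL: "integral_lipschitz h C" and c: "\<bar>c - 1\<bar> \<le> 2 * \<epsilon>" and eps: "\<epsilon> \<le> 1/2"
  shows "\<bar>freq_resp h t - freq_resp h (c * t)\<bar> \<le> 2 * C * \<epsilon> + 4 * C * \<epsilon>\<^sup>2"
proof -
  define D where "D = \<bar>freq_resp h t - freq_resp h (c * t)\<bar>"
  have C: "C > 0" using IL by (simp add: integral_lipschitz_def)
  have eps0: "0 \<le> \<epsilon>" using c by linarith
  have D0: "0 \<le> D" by (simp add: D_def)
  have "D * (2 - 2 * \<epsilon>) \<le> D * (1 + c)"
    using c D0 by (intro mult_left_mono) auto
  also have "\<dots> \<le> 2 * C * \<bar>c - 1\<bar>"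
    unfolding D_def using c eps by (intro integral_lipschitz_scale[OF IL]) auto
  also have "\<dots> \<le> 2 * C * (2 * \<epsilon>)"
    using c C by simp
  finally have key: "D * (1 - \<epsilon>) \<le> 2 * C * \<epsilon>"
    by (simp add: algebra_simps)
  have "1 \<le> (1 - \<epsilon>) * (1 + 2 * \<epsilon>)"
    using eps0 eps mult_nonneg_nonneg[of \<epsilon> "1 - 2 * \<epsilon>"] by (simp add: algebra_simps)
  then have "D \<le> D * (1 - \<epsilon>) * (1 + 2 * \<epsilon>)"
    using D0 by (metis mult_left_mono mult.right_neutral mult.assoc)
  also have "\<dots> \<le> 2 * C * \<epsilon> * (1 + 2 * \<epsilon>)"
    using key eps0 by (intro mult_right_mono) auto
  also have "\<dots> = 2 * C * \<epsilon> + 4 * C * \<epsilon>\<^sup>2"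
    by (simp add: algebra_simps power2_eq_square)
  finally show ?thesis by (simp add: D_def)
qed

lemma snorm_graph_filter_scale_diff_le:
  assumes "symmetric_mat S" and hs: "\<forall>l. summable (\<lambda>k. h k * l ^ k)" and "integral_lipschitz h C"
    and "\<bar>c - 1\<bar> \<le> 2 * \<epsilon>" and "\<epsilon> \<le> 1/2"
  shows "snorm (graph_filter h S - graph_filter h (c *\<^sub>R S)) \<le> 2 * C * \<epsilon> + 4 * C * \<epsilon>\<^sup>2"
proof -
  obtain g d where g: "orthonormal_family g" and S: "S = spectral_sum g d"
    using symmetric_mat_spectral_sum[OF assms(1)] .
  have "graph_filter h S - graph_filter h (c *\<^sub>R S)
      = spectral_sum g (\<lambda>i. freq_resp h (d i) - freq_resp h (c * d i))"
    unfolding S spectral_sum_scaleR by (simp add: graph_filter_spectral_sum(2)[OF g hs] spectral_sum_diff)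
  also have "snorm \<dots> \<le> 2 * C * \<epsilon> + 4 * C * \<epsilon>\<^sup>2"
    using integral_lipschitz_scale_le[OF assms(3-5)] by (rule snorm_spectral_sum_le[OF g])
  finally show ?thesis .
qed

section \<open>Lipschitz continuity of graph filters\<close>

text \<open>\<open>deriv_majorant h R\<close> majorises \<open>|h'|\<close> on \<open>[-R, R]\<close>.\<close>

definition deriv_majorant :: "(nat \<Rightarrow> real) \<Rightarrow> real \<Rightarrow> real" where
  "deriv_majorant h R = (\<Sum>k. \<bar>h k\<bar> * (real k * R ^ (k - 1)))"

lemma summable_deriv_majorant:
  assumes hs: "\<forall>l. summable (\<lambda>k. h k * l ^ k)" and R: "R \<ge> 0"
  shows "summable (\<lambda>k. \<bar>h k\<bar> * (real k * R ^ (k - 1)))"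
proof -
  have "summable (\<lambda>k. diffs h k * (R + 1) ^ k)"
    using hs by (intro termdiff_converges_all) auto
  then have "summable (\<lambda>k. norm (diffs h k * R ^ k))"
    by (rule powser_insidea) (use R in auto)
  then have "summable (\<lambda>k. \<bar>h (Suc k)\<bar> * (real (Suc k) * R ^ (Suc k - 1)))"
    using R by (simp add: diffs_def abs_mult mult_ac del: of_nat_Suc)
  then show ?thesis by (subst summable_Suc_iff[symmetric])
qed

lemma deriv_majorant_nonneg:
  assumes "\<forall>l. summable (\<lambda>k. h k * l ^ k)" and "R \<ge> 0"
  shows "0 \<le> deriv_majorant h R"
  unfolding deriv_majorant_def
  using assms by (intro suminf_nonneg summable_deriv_majorant) auto

lemma bounded_linear_matrix_vector_mult_left: "bounded_linear (\<lambda>M::real^'n^'m. M *v x)"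
  unfolding linear_conv_bounded_linear[symmetric]
  by (rule linearI) (simp_all add: matrix_vector_mult_add_rdistrib scaleR_matrix_vector_assoc)

lemma graph_filter_mult_vec:
  assumes "summable (\<lambda>k. h k *\<^sub>R mpow A k)"
  shows "graph_filter h A *v x = (\<Sum>k. h k *\<^sub>R (mpow A k *v x))"
  and "summable (\<lambda>k. h k *\<^sub>R (mpow A k *v x))"
  using bounded_linear.suminf[OF bounded_linear_matrix_vector_mult_left assms, of x]
    bounded_linear.summable[OF bounded_linear_matrix_vector_mult_left assms, of x]
  by (simp_all add: graph_filter_def scaleR_matrix_vector_assoc)

lemma snorm_mpow_le:
  assumes A: "snorm A \<le> R"
  shows "snorm (mpow A k) \<le> R ^ k"
proof (induction k)
  case (Suc k)
  have "snorm (mpow A (Suc k)) \<le> snorm A * snorm (mpow A k)"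
    by (simp add: snorm_mult_le)
  also have "\<dots> \<le> R * R ^ k"
    using Suc A order_trans[OF snorm_nonneg A] by (intro mult_mono) (auto simp: snorm_nonneg)
  finally show ?case by simp
qed (simp add: snorm_mat_1)

lemma snorm_mpow_diff_le:
  assumes A: "snorm A \<le> R" and B: "snorm B \<le> R"
  shows "snorm (mpow A k - mpow B k) \<le> real k * R ^ (k - 1) * snorm (A - B)"
proof (induction k)
  case (Suc k)
  have R: "0 \<le> R" using A snorm_nonneg order_trans by blast
  have "mpow A (Suc k) - mpow B (Suc k) = A ** (mpow A k - mpow B k) + (A - B) ** mpow B k"
    by (simp add: matrix_diff_ldistrib matrix_diff_rdistrib)
  then have "snorm (mpow A (Suc k) - mpow B (Suc k))
      \<le> snorm (A ** (mpow A k - mpow B k)) + snorm ((A - B) ** mpow B k)"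
    by (simp add: snorm_add_le)
  also have "\<dots> \<le> snorm A * snorm (mpow A k - mpow B k) + snorm (A - B) * snorm (mpow B k)"
    by (intro add_mono snorm_mult_le)
  also have "\<dots> \<le> R * (real k * R ^ (k - 1) * snorm (A - B)) + snorm (A - B) * R ^ k"
    using Suc A snorm_mpow_le[OF B, of k]
    by (intro add_mono mult_mono) (auto simp: snorm_nonneg R)
  also have "\<dots> = real (Suc k) * R ^ (Suc k - 1) * snorm (A - B)"
    by (cases k) (simp_all add: algebra_simps)
  finally show ?case .
qed (simp add: snorm_le)

lemma snorm_graph_filter_diff_le:
  assumes hs: "\<forall>l. summable (\<lambda>k. h k * l ^ k)"
    and sA: "summable (\<lambda>k. h k *\<^sub>R mpow A k)" and sB: "summable (\<lambda>k. h k *\<^sub>R mpow B k)"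
    and A: "snorm A \<le> R" and B: "snorm B \<le> R"
  shows "snorm (graph_filter h A - graph_filter h B) \<le> deriv_majorant h R * snorm (A - B)"
proof (rule snorm_le)
  fix x
  have R: "0 \<le> R" using A snorm_nonneg order_trans by blast
  note majorant = summable_deriv_majorant[OF hs R]
  have "(graph_filter h A - graph_filter h B) *v x
      = (\<Sum>k. h k *\<^sub>R (mpow A k *v x)) - (\<Sum>k. h k *\<^sub>R (mpow B k *v x))"
    by (simp only: matrix_vector_mult_diff_rdistrib graph_filter_mult_vec(1)[OF sA] graph_filter_mult_vec(1)[OF sB])
  also have "\<dots> = (\<Sum>k. h k *\<^sub>R (mpow A k *v x) - h k *\<^sub>R (mpow B k *v x))"
    by (rule suminf_diff[OF graph_filter_mult_vec(2)[OF sA] graph_filter_mult_vec(2)[OF sB]])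
  also have "\<dots> = (\<Sum>k. h k *\<^sub>R ((mpow A k - mpow B k) *v x))"
    by (simp only: matrix_vector_mult_diff_rdistrib scaleR_diff_right)
  also have "norm \<dots> \<le> (\<Sum>k. \<bar>h k\<bar> * (real k * R ^ (k - 1)) * (snorm (A - B) * norm x))"
  proof (rule norm_suminf_le)
    fix k
    have "norm ((mpow A k - mpow B k) *v x) \<le> snorm (mpow A k - mpow B k) * norm x"
      by (rule norm_mult_vec_le_snorm)
    also have "\<dots> \<le> real k * R ^ (k - 1) * snorm (A - B) * norm x"
      by (rule mult_right_mono[OF snorm_mpow_diff_le[OF A B] norm_ge_zero])
    finally have "\<bar>h k\<bar> * norm ((mpow A k - mpow B k) *v x)
        \<le> \<bar>h k\<bar> * (real k * R ^ (k - 1) * snorm (A - B) * norm x)"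
      by (rule mult_left_mono) simp
    then show "norm (h k *\<^sub>R ((mpow A k - mpow B k) *v x))
        \<le> \<bar>h k\<bar> * (real k * R ^ (k - 1)) * (snorm (A - B) * norm x)"
      by (simp add: mult.assoc)
  qed (intro summable_mult2 majorant)
  also have "\<dots> = deriv_majorant h R * (snorm (A - B) * norm x)"
    unfolding deriv_majorant_def by (rule suminf_mult2[OF majorant, symmetric])
  finally show "norm ((graph_filter h A - graph_filter h B) *v x) \<le> deriv_majorant h R * snorm (A - B) * norm x"
    by (simp only: mult.assoc)
qed

section \<open>Relative perturbations\<close>

lemma symmetric_mat_rel_pert:
  assumes "symmetric_mat S" and "symmetric_mat E"
  shows "symmetric_mat (S + (E ** S + S ** E))"
proof -
  have transpose_add: "transpose (X + Y) = transpose X + transpose Y" for X Y :: "real^'n^'n"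
    by (simp add: vec_eq_iff transpose_def)
  show ?thesis
    using assms by (simp add: symmetric_mat_def transpose_add matrix_transpose_mul add.commute)
qed

lemma snorm_rel_pert_le: "snorm (S + (E ** S + S ** E)) \<le> (1 + 2 * snorm E) * snorm S"
proof -
  have "snorm (S + (E ** S + S ** E)) \<le> snorm S + (snorm E * snorm S + snorm S * snorm E)"
    by (meson add_mono order_trans snorm_add_le snorm_mult_le order_refl)
  then show ?thesis by (simp add: algebra_simps)
qed

lemma snorm_rel_pert_minus_scaling_le:
  "snorm (S + (E ** S + S ** E) - (1 + 2 * a) *\<^sub>R S) \<le> 2 * snorm (E - a *\<^sub>R mat 1) * snorm S"
proof -
  define F where "F = E - a *\<^sub>R mat 1"
  have "F ** S = E ** S - a *\<^sub>R S"
    by (simp add: F_def matrix_diff_rdistrib flip: scalar_matrix_assoc)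
  moreover have "S ** F = S ** E - a *\<^sub>R S"
    by (simp add: F_def matrix_diff_ldistrib matrix_scalar_ac)
  moreover have "(1 + 2 * a) *\<^sub>R S = S + (a *\<^sub>R S + a *\<^sub>R S)"
    by (simp only: scaleR_left_distrib mult_2 scaleR_one)
  moreover have "s + (x + y) - (s + (z + z)) = (x - z) + (y - z)" for s x y z :: "real^'n^'n"
    by (simp add: algebra_simps)
  ultimately have "S + (E ** S + S ** E) - (1 + 2 * a) *\<^sub>R S = F ** S + S ** F"
    by metis
  also have "snorm \<dots> \<le> snorm F * snorm S + snorm S * snorm F"
    by (meson add_mono order_trans snorm_add_le snorm_mult_le)
  finally show ?thesis by (simp add: F_def algebra_simps)
qed

lemma normalized_pert_near_sign:
  fixes E :: "real^'n^'n"
  assumes "min (snorm ((1 / snorm E) *\<^sub>R E - mat 1)) (snorm ((1 / snorm E) *\<^sub>R E + mat 1)) \<le> \<epsilon>"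
    and "\<epsilon> < 1"
  obtains s where "\<bar>s\<bar> = 1" and "snorm (E - (s * snorm E) *\<^sub>R mat 1) \<le> snorm E * \<epsilon>"
proof -
  define e where "e = snorm E"
  have "e \<noteq> 0"
  proof
    assume "e = 0"
    then have "min (snorm ((1 / e) *\<^sub>R E - mat 1)) (snorm ((1 / e) *\<^sub>R E + mat 1)) = 1"
      using snorm_scaleR[of "-1" "mat 1 :: real^'n^'n"] by (simp add: snorm_mat_1)
    then show False using assms by (simp add: e_def)
  qed
  then have e: "e > 0" using snorm_nonneg[of E] by (simp add: e_def)
  have scale: "E - (s * e) *\<^sub>R mat 1 = e *\<^sub>R ((1 / e) *\<^sub>R E - s *\<^sub>R mat 1)" for s
    using e by (simp add: scaleR_diff_right)
  obtain s where s: "\<bar>s\<bar> = 1" and close: "snorm ((1 / e) *\<^sub>R E - s *\<^sub>R mat 1) \<le> \<epsilon>"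
  proof (cases "snorm ((1 / e) *\<^sub>R E - mat 1) \<le> \<epsilon>")
    case True
    then show thesis by (intro that[of 1]) simp_all
  next
    case False
    then have "snorm ((1 / e) *\<^sub>R E + mat 1) \<le> \<epsilon>" using assms(1) by (simp add: e_def)
    then show thesis by (intro that[of "-1"]) simp_all
  qed
  have "snorm (E - (s * e) *\<^sub>R mat 1) \<le> e * \<epsilon>"
    unfolding scale snorm_scaleR using e close by (simp add: mult_left_mono)
  then show thesis using s by (intro that) (simp_all add: e_def)
qed

lemma snorm_graph_filter_rel_pert_near_scaling:
  fixes S E :: "real^'n^'n"
  assumes S: "symmetric_mat S" and E: "symmetric_mat E" and hs: "\<forall>l. summable (\<lambda>k. h k * l ^ k)"
    and IL: "integral_lipschitz h C"
    and eps: "snorm E \<le> \<epsilon>" "\<epsilon> \<le> 1/2" and a: "\<bar>a\<bar> \<le> \<epsilon>" "snorm (E - a *\<^sub>R mat 1) \<le> \<epsilon>\<^sup>2"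
  shows "snorm (graph_filter h S - graph_filter h (S + (E ** S + S ** E)))
           \<le> 2 * C * \<epsilon> + (4 * C + 2 * snorm S * deriv_majorant h (2 * snorm S)) * \<epsilon>\<^sup>2"
proof -
  define A where "A = S + (E ** S + S ** E)"
  define B where "B = (1 + 2 * a) *\<^sub>R S"
  define L where "L = deriv_majorant h (2 * snorm S)"
  have symA: "symmetric_mat A" unfolding A_def by (rule symmetric_mat_rel_pert[OF S E])
  have symB: "symmetric_mat B" using S by (simp add: B_def symmetric_mat_def transpose_scalar)
  have "snorm A \<le> (1 + 2 * snorm E) * snorm S" unfolding A_def by (rule snorm_rel_pert_le)
  also have "\<dots> \<le> 2 * snorm S" using eps by (intro mult_right_mono) (auto simp: snorm_nonneg)
  finally have A_le: "snorm A \<le> 2 * snorm S" .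
  have "snorm B = \<bar>1 + 2 * a\<bar> * snorm S" by (simp add: B_def snorm_scaleR)
  also have "\<dots> \<le> 2 * snorm S" using a eps by (intro mult_right_mono) (auto simp: snorm_nonneg)
  finally have B_le: "snorm B \<le> 2 * snorm S" .
  have "snorm (A - B) \<le> 2 * snorm (E - a *\<^sub>R mat 1) * snorm S"
    unfolding A_def B_def by (rule snorm_rel_pert_minus_scaling_le)
  also have "\<dots> \<le> 2 * \<epsilon>\<^sup>2 * snorm S"
    using a(2) by (intro mult_right_mono) (auto simp: snorm_nonneg)
  finally have AB: "snorm (A - B) \<le> 2 * \<epsilon>\<^sup>2 * snorm S" .
  have "snorm (graph_filter h S - graph_filter h A)
      \<le> snorm (graph_filter h S - graph_filter h B) + snorm (graph_filter h A - graph_filter h B)"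
    using snorm_diff_le[of "graph_filter h S - graph_filter h B" "graph_filter h A - graph_filter h B"]
    by simp
  also have "\<dots> \<le> (2 * C * \<epsilon> + 4 * C * \<epsilon>\<^sup>2) + L * snorm (A - B)"
  proof (rule add_mono)
    show "snorm (graph_filter h S - graph_filter h B) \<le> 2 * C * \<epsilon> + 4 * C * \<epsilon>\<^sup>2"
      unfolding B_def using a eps by (intro snorm_graph_filter_scale_diff_le[OF S hs IL]) auto
    show "snorm (graph_filter h A - graph_filter h B) \<le> L * snorm (A - B)"
      unfolding L_def using A_le B_le
      by (intro snorm_graph_filter_diff_le[OF hs] summable_graph_filter_symmetric[OF symA hs]
          summable_graph_filter_symmetric[OF symB hs])
  qed
  also have "\<dots> \<le> (2 * C * \<epsilon> + 4 * C * \<epsilon>\<^sup>2) + L * (2 * \<epsilon>\<^sup>2 * snorm S)"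
    using AB deriv_majorant_nonneg[OF hs, of "2 * snorm S"] snorm_nonneg[of S]
    by (simp add: L_def mult_left_mono)
  finally show ?thesis by (simp add: A_def L_def algebra_simps)
qed

lemma snorm_graph_filter_rel_pert_le:
  fixes S E :: "real^'n^'n"
  assumes S: "symmetric_mat S" and E: "symmetric_mat E" and hs: "\<forall>l. summable (\<lambda>k. h k * l ^ k)"
    and hb: "\<forall>l. \<bar>freq_resp h l\<bar> \<le> 1" and IL: "integral_lipschitz h C"
    and "snorm E \<le> \<epsilon>"
    and near: "min (snorm ((1 / snorm E) *\<^sub>R E - mat 1)) (snorm ((1 / snorm E) *\<^sub>R E + mat 1)) \<le> \<epsilon>"
  shows "snorm (graph_filter h S - graph_filter h (S + (E ** S + S ** E)))
           \<le> 2 * C * \<epsilon> + (4 * C + 2 * snorm S * deriv_majorant h (2 * snorm S) + 32) * \<epsilon>\<^sup>2"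
proof -
  have C: "C > 0" using IL by (simp add: integral_lipschitz_def)
  have eps: "0 \<le> \<epsilon>" using \<open>snorm E \<le> \<epsilon>\<close> snorm_nonneg[of E] by linarith
  have L: "0 \<le> deriv_majorant h (2 * snorm S)"
    using hs snorm_nonneg[of S] by (intro deriv_majorant_nonneg) auto
  show ?thesis
  proof (cases "\<epsilon> < 1/4")
    case True
    obtain s where s: "\<bar>s\<bar> = 1" and close: "snorm (E - (s * snorm E) *\<^sub>R mat 1) \<le> snorm E * \<epsilon>"
      using normalized_pert_near_sign[OF near] True by auto
    have "snorm E * \<epsilon> \<le> \<epsilon>\<^sup>2"
      using \<open>snorm E \<le> \<epsilon>\<close> eps by (simp add: power2_eq_square mult_right_mono)
    then have "snorm (graph_filter h S - graph_filter h (S + (E ** S + S ** E)))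
        \<le> 2 * C * \<epsilon> + (4 * C + 2 * snorm S * deriv_majorant h (2 * snorm S)) * \<epsilon>\<^sup>2"
      using True s close \<open>snorm E \<le> \<epsilon>\<close>
      by (intro snorm_graph_filter_rel_pert_near_scaling[OF S E hs IL, where a = "s * snorm E"])
        (auto simp: abs_mult snorm_nonneg)
    moreover have "(4 * C + 2 * snorm S * deriv_majorant h (2 * snorm S)) * \<epsilon>\<^sup>2
        \<le> (4 * C + 2 * snorm S * deriv_majorant h (2 * snorm S) + 32) * \<epsilon>\<^sup>2"
      by (intro mult_right_mono) auto
    ultimately show ?thesis by linarith
  next
    case False
    have A: "symmetric_mat (S + (E ** S + S ** E))" by (rule symmetric_mat_rel_pert[OF S E])
    have "snorm (graph_filter h S - graph_filter h (S + (E ** S + S ** E))) \<le> 1 + 1"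
      using snorm_graph_filter_le[OF S hs] snorm_graph_filter_le[OF A hs] hb
      by (meson add_mono order_trans snorm_diff_le)
    also have "\<dots> \<le> 32 * \<epsilon>\<^sup>2"
      using False power_mono[of "1/4" \<epsilon> 2] by (simp add: power2_eq_square)
    also have "\<dots> \<le> 2 * C * \<epsilon> + (4 * C + 2 * snorm S * deriv_majorant h (2 * snorm S) + 32) * \<epsilon>\<^sup>2"
      using C eps L snorm_nonneg[of S] by (simp add: algebra_simps)
    finally show ?thesis .
  qed
qed

section \<open>Permutation matrices\<close>

lemma orthogonal_matrix_perm_mat:
  assumes p: "p permutes (UNIV :: 'n set)"
  shows "orthogonal_matrix (perm_mat p :: real^'n^'n)"
proof -
  have "(transpose (perm_mat p) ** (perm_mat p :: real^'n^'n)) $ i $ j = (if p j = p i then 1 else 0)" for i j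
  proof -
    have "(transpose (perm_mat p) ** (perm_mat p :: real^'n^'n)) $ i $ j =
        (\<Sum>k\<in>UNIV. if k = p i then (if p j = p i then 1 else 0) else 0)"
      unfolding matrix_matrix_mult_def transpose_def perm_mat_def
      by (simp only: vec_lambda_beta) (intro sum.cong refl; auto)
    then show ?thesis by simp
  qed
  moreover have "p j = p i \<longleftrightarrow> i = j" for i j
    using permutes_inj[OF p] by (auto simp: inj_def)
  ultimately show ?thesis
    by (simp add: orthogonal_matrix vec_eq_iff mat_def)
qed

lemma transpose_perm_mat:
  assumes "p permutes (UNIV :: 'n set)"
  shows "transpose (perm_mat p) = (perm_mat (inv p) :: real^'n^'n)"
  unfolding vec_eq_iff transpose_def perm_mat_def using permutes_inv_eq[OF assms] by auto

lemma transpose_in_perm_mats: "P \<in> perm_mats \<Longrightarrow> transpose P \<in> perm_mats"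
  unfolding perm_mats_def by (auto simp: transpose_perm_mat intro: permutes_inv)

lemma orthogonal_matrix_perm_mats: "P \<in> perm_mats \<Longrightarrow> orthogonal_matrix P"
  unfolding perm_mats_def by (auto intro: orthogonal_matrix_perm_mat)

lemma finite_perm_mats: "finite (perm_mats :: (real^'n^'n) set)"
  unfolding perm_mats_def by (rule finite_image_set) (simp add: finite_permutations)

lemma perm_op_dist_graph_filter_le:
  fixes S S' A P :: "real^'n^'n"
  assumes P: "P \<in> perm_mats" and conj: "transpose P ** S' ** P = A"
    and A: "symmetric_mat A" and hs: "\<forall>l. summable (\<lambda>k. h k * l ^ k)"
  shows "perm_op_dist (graph_filter h S) (graph_filter h S') \<le> snorm (graph_filter h S - graph_filter h A)"
proof -
  have orth: "orthogonal_matrix P" using P by (rule orthogonal_matrix_perm_mats)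
  have "P ** A ** transpose P = (P ** transpose P) ** S' ** (P ** transpose P)"
    unfolding conj[symmetric] by (simp add: matrix_mul_assoc)
  also have "\<dots> = S'" using orth by (simp add: orthogonal_matrix_def)
  finally have HS': "graph_filter h S' = P ** graph_filter h A ** transpose P"
    by (simp flip: graph_filter_orthogonal_conj[OF orth A hs])
  have bound: "norm (P *v (graph_filter h S *v x) - graph_filter h S' *v (P *v x))
      \<le> snorm (graph_filter h S - graph_filter h A) * norm x" for x
  proof -
    have "transpose P *v (P *v x) = x"
      using orth by (simp add: matrix_vector_mul_assoc orthogonal_matrix_def)
    then have "graph_filter h S' *v (P *v x) = P *v (graph_filter h A *v x)"
      by (simp add: HS' flip: matrix_vector_mul_assoc)
    then have "P *v (graph_filter h S *v x) - graph_filter h S' *v (P *v x)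
        = P *v ((graph_filter h S - graph_filter h A) *v x)"
      by (simp add: matrix_vector_mult_diff_rdistrib matrix_vector_mult_diff_distrib)
    then show ?thesis
      by (simp add: norm_orthogonal_matrix_mult_vec[OF orth] norm_mult_vec_le_snorm)
  qed
  have "perm_op_dist (graph_filter h S) (graph_filter h S')
      \<le> onorm (\<lambda>x. transpose (transpose P) *v (graph_filter h S *v x)
                  - graph_filter h S' *v (transpose (transpose P) *v x))"
    unfolding perm_op_dist_def
    by (rule Min_le[OF finite_imageI[OF finite_perm_mats] imageI[OF transpose_in_perm_mats[OF P]]])
  also have "\<dots> \<le> snorm (graph_filter h S - graph_filter h A)"
    unfolding transpose_transpose by (rule onorm_le[OF bound])
  finally show ?thesis .
qed

theorem theorem3:
  fixes S :: "real^'n^'n" and h :: "nat \<Rightarrow> real" and C :: real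
  assumes "symmetric_mat S"
    and "\<forall>l. summable (\<lambda>k. h k * l ^ k)"
    and "\<forall>l. \<bar>freq_resp h l\<bar> \<le> 1"
    and "integral_lipschitz h C"
  shows "\<exists>K. \<forall>(S' :: real^'n^'n) E (\<epsilon> :: real).
           symmetric_mat S' \<and> symmetric_mat E \<and> E \<in> rel_pert_set S S' \<and>
           pert_dist S S' \<le> snorm E \<and> snorm E \<le> \<epsilon> \<and>
           min (snorm ((1 / snorm E) *\<^sub>R E - mat 1)) (snorm ((1 / snorm E) *\<^sub>R E + mat 1)) \<le> \<epsilon>
           \<longrightarrow> perm_op_dist (graph_filter h S) (graph_filter h S') \<le> 2 * C * \<epsilon> + K * \<epsilon>\<^sup>2"
proof (intro exI allI impI, elim conjE)
  fix S' E :: "real^'n^'n" and \<epsilon> :: real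
  assume "symmetric_mat S'" and E: "symmetric_mat E" and "E \<in> rel_pert_set S S'"
    and "pert_dist S S' \<le> snorm E" and "snorm E \<le> \<epsilon>"
    and "min (snorm ((1 / snorm E) *\<^sub>R E - mat 1)) (snorm ((1 / snorm E) *\<^sub>R E + mat 1)) \<le> \<epsilon>"
  then obtain P where P: "P \<in> perm_mats" and conj: "transpose P ** S' ** P = S + (E ** S + S ** E)"
    unfolding rel_pert_set_def by blast
  have "perm_op_dist (graph_filter h S) (graph_filter h S')
      \<le> snorm (graph_filter h S - graph_filter h (S + (E ** S + S ** E)))"
    using P conj symmetric_mat_rel_pert[OF assms(1) E] assms(2) by (rule perm_op_dist_graph_filter_le)
  also have "\<dots> \<le> 2 * C * \<epsilon> + (4 * C + 2 * snorm S * deriv_majorant h (2 * snorm S) + 32) * \<epsilon>\<^sup>2"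
    using assms(1) E assms(2-4) \<open>snorm E \<le> \<epsilon>\<close> \<open>min _ _ \<le> \<epsilon>\<close>
    by (rule snorm_graph_filter_rel_pert_le)
  finally show "perm_op_dist (graph_filter h S) (graph_filter h S')
      \<le> 2 * C * \<epsilon> + (4 * C + 2 * snorm S * deriv_majorant h (2 * snorm S) + 32) * \<epsilon>\<^sup>2" .
qed

end
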